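(* There is an absolute constant $c$ such that the following holds. Let $0 < \epsilon < 4/5$, $z_1 = (\log\log x)^{1-\epsilon}$ and $z_2 = (\log\log x)^{1+\epsilon}$. Then for all sufficiently large $x$, $$\sum_{z_1 \le r \le z_2} A_r(x) \le c \frac{\epsilon x}{\log\log\log x},$$ the sum being over primes $r$.
   Context: For a positive integer $m$, $m'$ denotes the odd part of $m-1$. For a prime $r$, $A_r(x)$ denotes the number of odd integers $n \le x$ such that $\prod_{p \mid n} \gcd(n', p') = 1$ (product over primes $p$ dividing $n$) and the least prime dividing $n'$ is $r$. $\log$ is the natural logarithm. *)

theory Defs
  imports "HOL-Analysis.Analysis" "HOL-Computational_Algebra.Primes"
begin

text \<open>Odd part of a natural number (odd part of 0 is taken to be 0).\<close>
definition odd_part :: "nat \<Rightarrow> nat" where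
  "odd_part m = m div 2 ^ multiplicity (2::nat) m"

definition oddm1 :: "nat \<Rightarrow> nat" where
  "oddm1 m = odd_part (m - 1)"

definition least_prime_divisor_is :: "nat \<Rightarrow> nat \<Rightarrow> bool" where
  "least_prime_divisor_is r m \<longleftrightarrow>
     prime r \<and> r dvd m \<and> (\<forall>q. prime q \<and> q dvd m \<longrightarrow> r \<le> q)"

definition A :: "nat \<Rightarrow> real \<Rightarrow> nat" where
  "A r x = card {n::nat. 1 \<le> n \<and> real n \<le> x \<and> odd n \<and>
      (\<Prod>p\<in>prime_factors n. gcd (oddm1 n) (oddm1 p)) = 1 \<and>
      least_prime_divisor_is r (oddm1 n)}"

end

(*
  An odd n \<le> x counted by A r x has n - 1 = 2rb with b \<le> x/(2r) free of every odd prime below r,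
  because r is the least prime factor of n'. Sieving b by the odd primes below z\<^sub>1 \<le> r gives
  A r x \<le> x/(2r) \<Prod>\<^sub>q (1 - 1/q) + \<Prod>\<^sub>q q, the product being at most 4 powr z\<^sub>1 by Chebyshev's bound.
  Comparing ln N \<le> H\<^sub>N with the Euler product shows that the product of 1 - 1/p over the
  primes p < z is at most 1 / ln z, hence A r x \<le> x / (r ln z\<^sub>1) + 4 powr z\<^sub>1. Chebyshev's bound on
  dyadic blocks bounds the sum of 1/r over the primes in [z\<^sub>1, z\<^sub>2] by 4 (ln (z\<^sub>2/z\<^sub>1) + ln 2) / ln z\<^sub>1.
  For z\<^sub>1,\<^sub>2 = (ln ln x)\<^bsup>1 \<mp> \<epsilon>\<^esup> we have ln z\<^sub>1 = (1 - \<epsilon>) ln ln ln x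
  and ln (z\<^sub>2/z\<^sub>1) = 2\<epsilon> ln ln ln x, so the main term is O(\<epsilon> x / ln ln ln x), while the error
  (z\<^sub>2 + 1) 4 powr z\<^sub>1 \<le> ((ln ln x)\<^sup>2 + 1) 4 powr (ln ln x) is negligible against x / ln ln ln x.
*)

theory Submission
  imports Defs "HOL-Number_Theory.Totient" "HOL-Real_Asymp.Real_Asymp"
begin

section \<open>Chebyshev's bound for the primorial\<close>

lemma prod_primes_dvd:
  fixes c :: nat
  assumes "finite P" "\<And>p. p \<in> P \<Longrightarrow> prime p" "\<And>p. p \<in> P \<Longrightarrow> p dvd c"
  shows "\<Prod>P dvd c"
  using assms
proof (induction P rule: finite_induct)
  case (insert p P)
  have "coprime p (\<Prod>P)"
    using insert by (intro prod_coprime_right) (auto intro: primes_coprime)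
  with insert show ?case by (simp add: divides_mult)
qed simp

lemma binomial_odd_middle_le: "(2*m+1) choose m \<le> 4^m"
proof -
  have "2 * ((2*m+1) choose m) = (\<Sum>k\<in>{m, m+1}. (2*m+1) choose k)"
    using binomial_symmetric[of m "2*m+1"] by simp
  also have "\<dots> \<le> (\<Sum>k\<le>2*m+1. (2*m+1) choose k)"
    by (rule sum_mono2) auto
  also have "\<dots> = 2^(2*m+1)"
    by (rule choose_row_sum)
  also have "\<dots> = 2 * 4^m"
    by (simp add: power_mult)
  finally show ?thesis by simp
qed

lemma prod_primes_between_dvd_binomial:
  "(\<Prod>p | prime p \<and> m+1 < p \<and> p \<le> 2*m+1. p) dvd ((2*m+1) choose m)"
proof (rule prod_primes_dvd)
  fix p assume p: "p \<in> {p. prime p \<and> m+1 < p \<and> p \<le> 2*m+1}"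
  have "fact (2*m+1) = fact m * fact (m+1) * ((2*m+1) choose m)"
    using binomial_fact_lemma[of m "2*m+1"] by (simp add: mult_ac)
  moreover have "p dvd fact (2*m+1)" "\<not> p dvd fact m" "\<not> p dvd fact (m+1)"
    using p by (auto simp: prime_dvd_fact_iff simp del: fact_Suc)
  ultimately show "p dvd ((2*m+1) choose m)"
    using p by (metis (mono_tags, lifting) mem_Collect_eq prime_dvd_mult_iff)
qed auto

lemma prod_primes_le_four_pow: "(\<Prod>p | prime p \<and> p \<le> n. p) \<le> 4 ^ n"
proof (induction n rule: less_induct)
  case (less n)
  consider "n \<le> 1" | "n = 2" | "2 < n" "even n" | m where "1 \<le> m" "n = 2*m+1"
  proof -
    have "n \<le> 1 \<or> n = 2 \<or> (2 < n \<and> even n) \<or> (\<exists>m. 1 \<le> m \<and> n = 2*m+1)"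
      by presburger
    then show thesis using that by blast
  qed
  then show ?case
  proof cases
    case 1
    then have "{p. prime p \<and> p \<le> n} = {}"
      by (auto dest: prime_ge_2_nat)
    then show ?thesis by (simp only:) simp
  next
    case 2
    then have "{p. prime p \<and> p \<le> n} = {2}"
      using prime_ge_2_nat two_is_prime_nat by (auto intro: order.antisym)
    then show ?thesis using 2 by (simp only:) simp
  next
    case 3
    then have "{p. prime p \<and> p \<le> n} = {p. prime p \<and> p \<le> n - 1}"
      using prime_odd_nat by (force simp: le_less)
    then have "(\<Prod>p | prime p \<and> p \<le> n. p) \<le> 4 ^ (n - 1)"
      using less[of "n - 1"] 3 by simp
    also have "\<dots> \<le> 4 ^ n"
      by (rule power_increasing) auto
    finally show ?thesis .
  next
    case (4 m)
    have split: "{p. prime p \<and> p \<le> n} = {p. prime p \<and> p \<le> m+1} \<union> {p. prime p \<and> m+1 < p \<and> p \<le> 2*m+1}"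
      using 4 by auto
    have fin: "finite {p. prime p \<and> p \<le> m+1}" "finite {p. prime p \<and> m+1 < p \<and> p \<le> 2*m+1}"
      by auto
    have "(\<Prod>p | prime p \<and> p \<le> n. p)
        = (\<Prod>p | prime p \<and> p \<le> m+1. p) * (\<Prod>p | prime p \<and> m+1 < p \<and> p \<le> 2*m+1. p)"
      unfolding split by (rule prod.union_disjoint[OF fin]) auto
    also have "\<dots> \<le> 4^(m+1) * 4^m"
    proof (rule mult_le_mono)
      show "(\<Prod>p | prime p \<and> p \<le> m+1. p) \<le> 4^(m+1)"
        using less[of "m+1"] 4 by simp
      have "(\<Prod>p | prime p \<and> m+1 < p \<and> p \<le> 2*m+1. p) \<le> (2*m+1) choose m"
        by (rule dvd_imp_le[OF prod_primes_between_dvd_binomial]) simp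
      then show "(\<Prod>p | prime p \<and> m+1 < p \<and> p \<le> 2*m+1. p) \<le> 4^m"
        using binomial_odd_middle_le[of m] by linarith
    qed
    also have "\<dots> = 4^n" using 4 by (simp add: power_add[symmetric])
    finally show ?thesis .
  qed
qed

lemma finite_Collect_real_le: "finite {n::nat. real n \<le> y}"
  by (rule finite_subset[of _ "{..nat \<lfloor>y\<rfloor>}"]) (auto dest: le_nat_floor)

lemma prod_primes_le_four_powr:
  fixes z :: real
  assumes "0 \<le> z"
  shows "(\<Prod>p | prime p \<and> real p \<le> z. real p) \<le> 4 powr z"
proof -
  have "{p. prime p \<and> real p \<le> z} = {p. prime p \<and> p \<le> nat \<lfloor>z\<rfloor>}"
    using assms by (auto simp: le_nat_iff le_floor_iff)
  then have "(\<Prod>p | prime p \<and> real p \<le> z. real p) = real (\<Prod>p | prime p \<and> p \<le> nat \<lfloor>z\<rfloor>. p)"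
    by simp
  also have "\<dots> \<le> real (4 ^ nat \<lfloor>z\<rfloor>)"
    by (rule of_nat_mono[OF prod_primes_le_four_pow])
  also have "\<dots> = 4 ^ nat \<lfloor>z\<rfloor>"
    by simp
  also have "\<dots> = 4 powr real (nat \<lfloor>z\<rfloor>)"
    by (simp add: powr_realpow)
  also have "\<dots> \<le> 4 powr z"
    using assms by (intro powr_mono) auto
  finally show ?thesis .
qed

lemma card_primes_between_le:
  fixes y z :: real
  assumes "1 < y" "0 \<le> z"
  shows "real (card {p. prime p \<and> y \<le> real p \<and> real p \<le> z}) \<le> z * ln 4 / ln y"
proof -
  define S where "S = {p. prime p \<and> y \<le> real p \<and> real p \<le> z}"
  have fin: "finite {p. prime p \<and> real p \<le> z}"
    by (rule finite_subset[OF _ finite_Collect_real_le[of z]]) auto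
  have "y ^ card S = (\<Prod>p\<in>S. y)"
    by simp
  also have "\<dots> \<le> (\<Prod>p\<in>S. real p)"
    using assms by (intro prod_mono) (auto simp: S_def)
  also have "\<dots> \<le> (\<Prod>p | prime p \<and> real p \<le> z. real p)"
    using fin by (intro prod_mono2) (auto simp: S_def dest: prime_gt_0_nat)
  also have "\<dots> \<le> 4 powr z"
    using assms(2) by (rule prod_primes_le_four_powr)
  finally have "ln (y ^ card S) \<le> ln (4 powr z)"
    using assms by (subst ln_le_cancel_iff) auto
  then have "card S * ln y \<le> z * ln 4"
    using assms by (simp add: ln_realpow)
  then show ?thesis
    using assms by (simp add: S_def field_simps)
qed

section \<open>Reciprocal sums over primes\<close>

lemma sum_inverse_primes_dyadic_le:
  fixes y :: real
  assumes "1 < y"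
  shows "(\<Sum>p | prime p \<and> y \<le> real p \<and> real p \<le> 2*y. 1 / real p) \<le> 2 * ln 4 / ln y"
proof -
  have "(\<Sum>p | prime p \<and> y \<le> real p \<and> real p \<le> 2*y. 1 / real p)
      \<le> (\<Sum>p | prime p \<and> y \<le> real p \<and> real p \<le> 2*y. 1 / y)"
    using assms by (intro sum_mono divide_left_mono) auto
  also have "\<dots> = real (card {p. prime p \<and> y \<le> real p \<and> real p \<le> 2*y}) / y"
    by simp
  also have "\<dots> \<le> 2 * y * ln 4 / ln y / y"
    using assms by (intro divide_right_mono card_primes_between_le) auto
  also have "\<dots> = 2 * ln 4 / ln y"
    using assms by simp
  finally show ?thesis .
qed

lemma powr_floor_log_bounds:
  fixes t :: real
  assumes "1 \<le> t"
  shows "2 ^ nat \<lfloor>log 2 t\<rfloor> \<le> t" "t < 2 * 2 ^ nat \<lfloor>log 2 t\<rfloor>"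
proof -
  have "0 \<le> log 2 t"
    using assms by simp
  then have k: "real (nat \<lfloor>log 2 t\<rfloor>) \<le> log 2 t" "log 2 t < real (nat \<lfloor>log 2 t\<rfloor>) + 1"
    by linarith+
  have "(2::real) ^ nat \<lfloor>log 2 t\<rfloor> = 2 powr real (nat \<lfloor>log 2 t\<rfloor>)"
    by (simp add: powr_realpow)
  also have "\<dots> \<le> 2 powr log 2 t"
    using k by (intro powr_mono) auto
  finally show "2 ^ nat \<lfloor>log 2 t\<rfloor> \<le> t"
    using assms by simp
  have "t = 2 powr log 2 t"
    using assms by simp
  also have "\<dots> < 2 powr (real (nat \<lfloor>log 2 t\<rfloor>) + 1)"
    using k by (intro powr_less_mono) auto
  also have "\<dots> = 2 * 2 ^ nat \<lfloor>log 2 t\<rfloor>"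
    by (simp add: powr_add powr_realpow)
  finally show "t < 2 * 2 ^ nat \<lfloor>log 2 t\<rfloor>" .
qed

text \<open>Cut \<open>[z\<^sub>1, z\<^sub>2]\<close> into \<open>log\<^sub>2 (z\<^sub>2/z\<^sub>1) + 1\<close> dyadic blocks.\<close>
lemma sum_inverse_primes_between_le:
  fixes z1 z2 :: real
  assumes "1 < z1" "z1 \<le> z2"
  shows "(\<Sum>p | prime p \<and> z1 \<le> real p \<and> real p \<le> z2. 1 / real p) \<le> 4 * (ln (z2 / z1) + ln 2) / ln z1"
proof -
  define R where "R = {p. prime p \<and> z1 \<le> real p \<and> real p \<le> z2}"
  define j where "j p = nat \<lfloor>log 2 (real p / z1)\<rfloor>" for p :: nat
  define J where "J = nat \<lfloor>log 2 (z2 / z1)\<rfloor>"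
  have finR: "finite R"
    unfolding R_def by (rule finite_subset[OF _ finite_Collect_real_le[of z2]]) auto
  have block: "z1 * 2 ^ j p \<le> real p \<and> real p \<le> 2 * (z1 * 2 ^ j p)" if "p \<in> R" for p
  proof -
    have "1 \<le> real p / z1"
      using that assms by (auto simp: R_def)
    from powr_floor_log_bounds[OF this] show ?thesis
      using assms by (simp add: j_def field_simps)
  qed
  have jJ: "j p \<in> {..J}" if "p \<in> R" for p
    using that assms unfolding R_def j_def J_def
    by (auto intro!: nat_mono floor_mono log_mono divide_right_mono)
  have "(\<Sum>p\<in>R. 1 / real p) = (\<Sum>i\<le>J. \<Sum>p | p \<in> R \<and> j p = i. 1 / real p)"
    using finR jJ by (intro sum.group[symmetric]) auto
  also have "\<dots> \<le> (\<Sum>i\<le>J. 2 * ln 4 / ln z1)"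
  proof (rule sum_mono)
    fix i
    define y where "y = z1 * 2 ^ i"
    have y: "z1 \<le> y"
      using assms by (simp add: y_def)
    have "(\<Sum>p | p \<in> R \<and> j p = i. 1 / real p) \<le> (\<Sum>p | prime p \<and> y \<le> real p \<and> real p \<le> 2*y. 1 / real p)"
    proof (rule sum_mono2)
      show "finite {p. prime p \<and> y \<le> real p \<and> real p \<le> 2*y}"
        by (rule finite_subset[OF _ finite_Collect_real_le[of "2*y"]]) auto
    qed (use block in \<open>auto simp: R_def y_def\<close>)
    also have "\<dots> \<le> 2 * ln 4 / ln y"
      using assms y by (intro sum_inverse_primes_dyadic_le) auto
    also have "\<dots> \<le> 2 * ln 4 / ln z1"
      using assms y by (intro divide_left_mono mult_pos_pos) auto
    finally show "(\<Sum>p | p \<in> R \<and> j p = i. 1 / real p) \<le> 2 * ln 4 / ln z1" .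
  qed
  also have "\<dots> = (real J + 1) * (4 * ln 2 / ln z1)"
    by (simp add: ln_realpow[of 2 2, simplified])
  also have "\<dots> \<le> (log 2 (z2 / z1) + 1) * (4 * ln 2 / ln z1)"
    using assms unfolding J_def by (intro mult_right_mono) auto
  also have "\<dots> = 4 * (ln (z2 / z1) + ln 2) / ln z1"
    using assms by (simp add: log_def field_simps)
  finally show ?thesis
    unfolding R_def .
qed

section \<open>An upper bound for \<open>\<Prod>\<^sub>p (1 - 1/p)\<close>\<close>

lemma prod_prime_powers_multiplicity:
  fixes n :: nat
  assumes "0 < n" "finite P" "prime_factors n \<subseteq> P" "\<And>p. p \<in> P \<Longrightarrow> prime p"
  shows "(\<Prod>p\<in>P. p ^ multiplicity p n) = n"
proof -
  have "(\<Prod>p\<in>P. p ^ multiplicity p n) = (\<Prod>p\<in>prime_factors n. p ^ multiplicity p n)"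
    using assms by (intro prod.mono_neutral_right) (auto simp: prime_factors_multiplicity)
  also have "\<dots> = n"
    using assms(1) by (rule prime_factorization_nat[symmetric])
  finally show ?thesis .
qed

text \<open>Unique factorisation embeds \<open>{1..N}\<close> into the exponent vectors of the primes up to \<open>N\<close>.\<close>
lemma harm_le_prod_primes_geometric:
  "(harm N :: real) \<le> (\<Prod>p | prime p \<and> p \<le> N. \<Sum>k\<le>N. (1 / real p) ^ k)"
proof -
  define P where "P = {p. prime p \<and> p \<le> N}"
  have finP: "finite P"
    unfolding P_def by auto
  have primeP: "prime p" if "p \<in> P" for p
    using that by (simp add: P_def)
  define h where "h n = restrict (\<lambda>p. multiplicity p n) P" for n :: nat
  have factors: "prime_factors n \<subseteq> P" if "n \<in> {1..N}" for n
    using that by (auto simp: P_def intro: order.trans[OF dvd_imp_le])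
  have prod_h: "(\<Prod>p\<in>P. p ^ h n p) = n" if "n \<in> {1..N}" for n
  proof -
    have "(\<Prod>p\<in>P. p ^ h n p) = (\<Prod>p\<in>P. p ^ multiplicity p n)"
      by (intro prod.cong) (auto simp: h_def)
    also have "\<dots> = n"
      using that finP factors[OF that] primeP by (intro prod_prime_powers_multiplicity) auto
    finally show ?thesis .
  qed
  have inj: "inj_on h {1..N}"
    by (rule inj_on_inverseI[where g = "\<lambda>g. \<Prod>p\<in>P. p ^ g p"]) (rule prod_h)
  have image: "h ` {1..N} \<subseteq> PiE P (\<lambda>_. {..N})"
  proof
    fix g assume "g \<in> h ` {1..N}"
    then obtain n where n: "n \<in> {1..N}" "g = h n"
      by auto
    have "multiplicity p n \<le> N" if "p \<in> P" for p
    proof -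
      have "multiplicity p n < 2 ^ multiplicity p n"
        by (rule less_exp)
      also have "\<dots> \<le> p ^ multiplicity p n"
        using prime_ge_2_nat[OF primeP[OF that]] by (rule power_mono) simp
      also have "\<dots> \<le> n"
        using n by (intro dvd_imp_le multiplicity_dvd) auto
      finally show ?thesis
        using n by simp
    qed
    then show "g \<in> PiE P (\<lambda>_. {..N})"
      using n by (auto simp: h_def)
  qed
  have "harm N = (\<Sum>n\<in>{1..N}. \<Prod>p\<in>P. (1 / real p) ^ h n p)"
  proof -
    have "(\<Prod>p\<in>P. (1 / real p) ^ h n p) = 1 / real n" if "n \<in> {1..N}" for n
      using prod_h[OF that] by (simp add: power_one_over prod_dividef flip: of_nat_power of_nat_prod)
    then show ?thesis
      by (simp add: harm_def divide_inverse)
  qed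
  also have "\<dots> = (\<Sum>g\<in>h ` {1..N}. \<Prod>p\<in>P. (1 / real p) ^ g p)"
    by (rule sum.reindex[OF inj, symmetric, unfolded comp_def])
  also have "\<dots> \<le> (\<Sum>g\<in>PiE P (\<lambda>_. {..N}). \<Prod>p\<in>P. (1 / real p) ^ g p)"
    by (intro sum_mono2 image finite_PiE finP) (auto intro: prod_nonneg)
  also have "\<dots> = (\<Prod>p\<in>P. \<Sum>k\<le>N. (1 / real p) ^ k)"
    by (rule prod_sum_PiE[symmetric]) (auto simp: finP)
  finally show ?thesis
    unfolding P_def .
qed

lemma prod_primes_less_one_minus_inverse_le:
  fixes z :: real
  assumes "1 < z"
  shows "(\<Prod>p | prime p \<and> real p < z. 1 - 1 / real p) \<le> 1 / ln z"
proof -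
  define N where "N = nat \<lceil>z\<rceil> - 1"
  have z: "real N < z" "z \<le> real N + 1"
    using assms unfolding N_def by linarith+
  have P: "{p. prime p \<and> real p < z} = {p. prime p \<and> p \<le> N}"
    using z by (auto simp: N_def)
  have pos: "0 < (\<Prod>p | prime p \<and> p \<le> N. 1 - 1 / real p)"
    by (intro prod_pos) (auto dest: prime_ge_2_nat simp: field_simps)
  have "ln z \<le> ln (real N + 1)"
    using assms z by simp
  also have "\<dots> \<le> harm N"
    by (rule ln_le_harm)
  also have "\<dots> \<le> (\<Prod>p | prime p \<and> p \<le> N. \<Sum>k\<le>N. (1 / real p) ^ k)"
    by (rule harm_le_prod_primes_geometric)
  also have "\<dots> \<le> (\<Prod>p | prime p \<and> p \<le> N. 1 / (1 - 1 / real p))"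
  proof (intro prod_mono conjI)
    fix p assume "p \<in> {p. prime p \<and> p \<le> N}"
    then have p: "2 \<le> real p"
      by (auto dest: prime_ge_2_nat)
    show "0 \<le> (\<Sum>k\<le>N. (1 / real p) ^ k)"
      by (intro sum_nonneg) simp
    have "(\<Sum>k\<le>N. (1 / real p) ^ k) \<le> (\<Sum>k. (1 / real p) ^ k)"
      using p by (intro sum_le_suminf summable_geometric) auto
    also have "\<dots> = 1 / (1 - 1 / real p)"
      using p by (intro suminf_geometric) simp
    finally show "(\<Sum>k\<le>N. (1 / real p) ^ k) \<le> 1 / (1 - 1 / real p)" .
  qed
  also have "\<dots> = 1 / (\<Prod>p | prime p \<and> p \<le> N. 1 - 1 / real p)"
    by (simp add: prod_dividef)
  finally show ?thesis
    unfolding P using pos assms by (simp add: field_simps)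
qed

section \<open>Counting residues coprime to a modulus\<close>

lemma in_totatives_iff_less:
  assumes "M \<noteq> (1::nat)"
  shows "a \<in> totatives M \<longleftrightarrow> a < M \<and> coprime a M"
proof
  assume "a \<in> totatives M"
  then have "0 < a" "a \<le> M" "coprime a M"
    by (simp_all add: in_totatives_iff)
  moreover have "a \<noteq> M"
    using \<open>coprime a M\<close> assms by auto
  ultimately show "a < M \<and> coprime a M"
    by simp
next
  assume a: "a < M \<and> coprime a M"
  have "a \<noteq> 0"
  proof
    assume "a = 0"
    with a have "coprime 0 M"
      by simp
    with assms show False
      by simp
  qed
  with a show "a \<in> totatives M"
    by (simp add: in_totatives_iff)
qed

lemma card_coprime_less:
  assumes "0 < M"
  shows "card {a. a < M \<and> coprime a M} = totient M"
proof (cases "M = 1")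
  case True
  then have "{a. a < M \<and> coprime a M} = {0}"
    by auto
  then show ?thesis
    using True by simp
next
  case False
  then have "{a. a < M \<and> coprime a M} = totatives M"
    by (auto simp: in_totatives_iff_less)
  then show ?thesis
    by (simp add: totient_def)
qed

lemma card_coprime_less_mult:
  assumes "0 < M"
  shows "card {b. b < k * M \<and> coprime b M} = k * totient M"
proof -
  have "{b. b < k * M \<and> coprime b M} = (\<lambda>(i, a). i * M + a) ` ({..<k} \<times> {a. a < M \<and> coprime a M})"
  proof (intro set_eqI iffI)
    fix b assume b: "b \<in> {b. b < k * M \<and> coprime b M}"
    then have "b div M < k" "b mod M < M" "coprime (b mod M) M"
      using assms by (auto simp: less_mult_imp_div_less)
    then show "b \<in> (\<lambda>(i, a). i * M + a) ` ({..<k} \<times> {a. a < M \<and> coprime a M})"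
      by (intro image_eqI[where x = "(b div M, b mod M)"]) auto
  next
    fix b assume "b \<in> (\<lambda>(i, a). i * M + a) ` ({..<k} \<times> {a. a < M \<and> coprime a M})"
    then obtain i a where b: "b = i * M + a" and "i < k" "a < M" "coprime a M"
      by auto
    have "i * M + a < Suc i * M"
      using \<open>a < M\<close> by simp
    also have "\<dots> \<le> k * M"
      using \<open>i < k\<close> by (intro mult_le_mono1) simp
    finally have "i * M + a < k * M" .
    moreover have "coprime (i * M + a) M"
      using coprime_mod_left_iff[of M "i * M + a"] assms \<open>a < M\<close> \<open>coprime a M\<close> by simp
    ultimately show "b \<in> {b. b < k * M \<and> coprime b M}"
      using b by simp
  qed
  moreover have "inj_on (\<lambda>(i, a). i * M + a) ({..<k} \<times> {a. a < M \<and> coprime a M})"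
    by (rule inj_on_inverseI[where g = "\<lambda>b. (b div M, b mod M)"]) auto
  ultimately show ?thesis
    using assms by (simp add: card_image card_cartesian_product card_coprime_less)
qed

lemma card_coprime_le:
  fixes y :: real
  assumes "0 < M" "0 \<le> y"
  shows "real (card {b. real b \<le> y \<and> coprime b M}) \<le> (y / M + 1) * totient M"
proof -
  define k where "k = nat \<lfloor>y\<rfloor> div M + 1"
  have "nat \<lfloor>y\<rfloor> < k * M"
    using dividend_less_div_times[OF assms(1), of "nat \<lfloor>y\<rfloor>"] by (simp add: k_def)
  then have "{b. real b \<le> y \<and> coprime b M} \<subseteq> {b. b < k * M \<and> coprime b M}"
    by (auto dest: le_nat_floor)
  then have "card {b. real b \<le> y \<and> coprime b M} \<le> card {b. b < k * M \<and> coprime b M}"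
    by (rule card_mono[rotated]) auto
  then have "card {b. real b \<le> y \<and> coprime b M} \<le> k * totient M"
    using assms(1) by (simp add: card_coprime_less_mult)
  moreover have "real k \<le> y / M + 1"
  proof -
    have "real (nat \<lfloor>y\<rfloor> div M) \<le> real (nat \<lfloor>y\<rfloor>) / M"
      by (rule of_nat_div_le_of_nat)
    also have "\<dots> \<le> y / M"
      using assms by (intro divide_right_mono) auto
    finally show ?thesis
      by (simp add: k_def)
  qed
  then have "real k * totient M \<le> (y / M + 1) * totient M"
    by (rule mult_right_mono) simp
  ultimately show ?thesis
    by (simp flip: of_nat_mult of_nat_le_iff)
qed

lemma totient_prod_primes:
  assumes "finite Q" "\<And>q. q \<in> Q \<Longrightarrow> prime q"
  shows "real (totient (\<Prod>Q)) = real (\<Prod>Q) * (\<Prod>q\<in>Q. 1 - 1 / real q)"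
proof -
  have "0 \<notin> Q"
    using assms(2) not_prime_0 by blast
  then have "prime_factors (\<Prod>Q) = Q"
    using assms by (subst prime_factors_prod) (auto simp: prime_prime_factors)
  then show ?thesis
    by (metis totient_formula2)
qed

section \<open>The sieve bound for \<open>A r x\<close>\<close>

lemma odd_part_dvd: "odd_part m dvd m"
  unfolding odd_part_def by (simp add: div_dvd_iff_mult multiplicity_dvd)

lemma odd_dvd_odd_part:
  assumes "odd q" "q dvd m"
  shows "q dvd odd_part m"
proof -
  have "m = 2 ^ multiplicity 2 m * odd_part m"
    unfolding odd_part_def by (simp add: multiplicity_dvd)
  then have "q dvd 2 ^ multiplicity 2 m * odd_part m"
    using assms(2) by simp
  moreover have "coprime q (2 ^ multiplicity 2 m)"
    using assms(1) by simp
  ultimately show ?thesis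
    by (simp add: coprime_dvd_mult_right_iff)
qed

text \<open>If the least prime factor of \<open>n'\<close> is \<open>r\<close>, then \<open>n = 1 + 2 r b\<close> with \<open>b\<close> free of the odd
  primes below \<open>r\<close>.\<close>
lemma A_le_card_coprime:
  assumes r: "prime r" "odd r"
    and Q: "finite Q" "\<And>q. q \<in> Q \<Longrightarrow> prime q \<and> odd q \<and> q < r"
  shows "A r x \<le> card {b. real b \<le> x / (2 * r) \<and> coprime b (\<Prod>Q)}"
proof -
  define T where "T = {n::nat. 1 \<le> n \<and> real n \<le> x \<and> odd n \<and>
      (\<Prod>p\<in>prime_factors n. gcd (oddm1 n) (oddm1 p)) = 1 \<and> least_prime_divisor_is r (oddm1 n)}"
  have "T \<subseteq> (\<lambda>b. 1 + 2 * r * b) ` {b. real b \<le> x / (2 * r) \<and> coprime b (\<Prod>Q)}"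
  proof
    fix n assume n: "n \<in> T"
    then have least: "least_prime_divisor_is r (odd_part (n - 1))"
      by (simp add: T_def oddm1_def)
    then have "r dvd n - 1"
      using odd_part_dvd dvd_trans by (auto simp: least_prime_divisor_is_def)
    moreover have "2 dvd n - 1"
      using n by (auto simp: T_def)
    ultimately have "2 * r dvd n - 1"
      using r by (simp add: divides_mult)
    then obtain b where "n - 1 = 2 * r * b"
      by (elim dvdE)
    with n have b: "n = 1 + 2 * r * b"
      by (auto simp: T_def)
    have "real (2 * r * b) \<le> x"
      using n b by (simp add: T_def)
    then have "real b \<le> x / (2 * r)"
      using prime_gt_0_nat[OF r(1)] by (simp add: field_simps)
    moreover have "coprime b (\<Prod>Q)"
    proof (intro prod_coprime_right)
      fix q assume q: "q \<in> Q"
      have "\<not> q dvd b"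
      proof
        assume "q dvd b"
        then have "q dvd odd_part (n - 1)"
          using Q(2)[OF q] b by (intro odd_dvd_odd_part) auto
        then have "r \<le> q"
          using least Q(2)[OF q] by (auto simp: least_prime_divisor_is_def)
        then show False
          using Q(2)[OF q] by simp
      qed
      then show "coprime b q"
        using Q(2)[OF q] prime_imp_coprime[of q b] by (simp add: coprime_commute)
    qed
    ultimately show "n \<in> (\<lambda>b. 1 + 2 * r * b) ` {b. real b \<le> x / (2 * r) \<and> coprime b (\<Prod>Q)}"
      using b by auto
  qed
  moreover have fin: "finite {b. real b \<le> x / (2 * r) \<and> coprime b (\<Prod>Q)}"
    by (rule finite_subset[OF _ finite_Collect_real_le[of "x / (2 * r)"]]) auto
  ultimately have "card T \<le> card ((\<lambda>b. 1 + 2 * r * b) ` {b. real b \<le> x / (2 * r) \<and> coprime b (\<Prod>Q)})"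
    by (intro card_mono finite_imageI)
  also have "\<dots> \<le> card {b. real b \<le> x / (2 * r) \<and> coprime b (\<Prod>Q)}"
    using fin by (rule card_image_le)
  finally show ?thesis
    by (simp add: A_def T_def)
qed

lemma A_le_sieve:
  assumes "prime r" "odd r" "finite Q" "\<And>q. q \<in> Q \<Longrightarrow> prime q \<and> odd q \<and> q < r" "0 \<le> x"
  shows "real (A r x) \<le> x / (2 * r) * (\<Prod>q\<in>Q. 1 - 1 / real q) + real (\<Prod>Q)"
proof -
  define M where "M = \<Prod>Q"
  have M: "0 < M"
    using assms by (auto simp: M_def prime_gt_0_nat intro!: prod_pos)
  have "real (A r x) \<le> real (card {b. real b \<le> x / (2 * r) \<and> coprime b M})"
    using A_le_card_coprime[OF assms(1-4)] by (simp add: M_def)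
  also have "\<dots> \<le> (x / (2 * r) / M + 1) * totient M"
    using M assms by (intro card_coprime_le) auto
  also have "\<dots> = x / (2 * r) * (totient M / M) + totient M"
    using M by (simp add: field_simps)
  also have "totient M / M = (\<Prod>q\<in>Q. 1 - 1 / real q)"
    using M totient_prod_primes[OF assms(3)] assms(4) by (simp add: M_def del: of_nat_prod)
  also have "real (totient M) \<le> M"
    by (simp add: totient_le)
  finally show ?thesis
    by (simp add: M_def)
qed

lemma sum_A_le:
  fixes z1 z2 x :: real
  assumes "2 < z1" "z1 \<le> z2" "0 \<le> x"
  shows "(\<Sum>r | prime r \<and> z1 \<le> real r \<and> real r \<le> z2. real (A r x))
       \<le> x / ln z1 * (\<Sum>r | prime r \<and> z1 \<le> real r \<and> real r \<le> z2. 1 / real r) + (z2 + 1) * 4 powr z1"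
proof -
  define R where "R = {r. prime r \<and> z1 \<le> real r \<and> real r \<le> z2}"
  define Q where "Q = {q. prime q \<and> q \<noteq> 2 \<and> real q < z1}"
  have finQ: "finite Q"
    by (rule finite_subset[OF _ finite_Collect_real_le[of z1]]) (auto simp: Q_def)
  have Q: "prime q \<and> odd q \<and> real q < z1" if "q \<in> Q" for q
    using that prime_odd_nat[of q] prime_ge_2_nat[of q] by (auto simp: Q_def)
  have density: "(\<Prod>q\<in>Q. 1 - 1 / real q) \<le> 2 / ln z1"
  proof -
    have "{p. prime p \<and> real p < z1} = insert 2 Q"
      using assms(1) by (auto simp: Q_def)
    then have "(\<Prod>p | prime p \<and> real p < z1. 1 - 1 / real p) = (\<Prod>q\<in>Q. 1 - 1 / real q) / 2"
      using finQ by (simp add: Q_def)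
    moreover have "(\<Prod>p | prime p \<and> real p < z1. 1 - 1 / real p) \<le> 1 / ln z1"
      using assms(1) by (intro prod_primes_less_one_minus_inverse_le) simp
    ultimately show ?thesis
      by simp
  qed
  have primorial: "real (\<Prod>Q) \<le> 4 powr z1"
  proof -
    have "real (\<Prod>Q) \<le> (\<Prod>p | prime p \<and> real p \<le> z1. real p)"
      unfolding of_nat_prod
      by (intro prod_mono2 finite_subset[OF _ finite_Collect_real_le[of z1]])
        (auto simp: Q_def dest: prime_gt_0_nat)
    also have "\<dots> \<le> 4 powr z1"
      using assms by (intro prod_primes_le_four_powr) simp
    finally show ?thesis .
  qed
  have A: "real (A r x) \<le> x / ln z1 * (1 / real r) + 4 powr z1" if "r \<in> R" for r
  proof -
    have r: "prime r" "z1 \<le> real r"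
      using that by (auto simp: R_def)
    then have "odd r"
      using assms(1) prime_odd_nat[of r] by simp
    have "prime q \<and> odd q \<and> q < r" if "q \<in> Q" for q
    proof -
      have "real q < real r"
        using Q[OF that] r(2) by linarith
      then show ?thesis
        using Q[OF that] by simp
    qed
    then have "real (A r x) \<le> x / (2 * r) * (\<Prod>q\<in>Q. 1 - 1 / real q) + real (\<Prod>Q)"
      using A_le_sieve[OF r(1) \<open>odd r\<close> finQ _ assms(3)] by blast
    also have "\<dots> \<le> x / (2 * r) * (2 / ln z1) + 4 powr z1"
      using density primorial assms(3) by (intro add_mono mult_left_mono) auto
    also have "\<dots> = x / ln z1 * (1 / real r) + 4 powr z1"
      by simp
    finally show ?thesis .
  qed
  have card: "real (card R) \<le> z2 + 1"
  proof -
    have "card R \<le> card {..nat \<lfloor>z2\<rfloor>}"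
      by (rule card_mono) (auto simp: R_def dest: le_nat_floor)
    then have "real (card R) \<le> real (nat \<lfloor>z2\<rfloor>) + 1"
      by simp
    also have "\<dots> \<le> z2 + 1"
      using assms of_nat_floor[of z2] by simp
    finally show ?thesis .
  qed
  have "(\<Sum>r\<in>R. real (A r x)) \<le> (\<Sum>r\<in>R. x / ln z1 * (1 / real r) + 4 powr z1)"
    by (rule sum_mono) (rule A)
  also have "\<dots> = x / ln z1 * (\<Sum>r\<in>R. 1 / real r) + real (card R) * 4 powr z1"
    by (simp add: sum.distrib sum_distrib_left)
  also have "\<dots> \<le> x / ln z1 * (\<Sum>r\<in>R. 1 / real r) + (z2 + 1) * 4 powr z1"
    using card by (intro add_left_mono mult_right_mono) auto
  finally show ?thesis
    unfolding R_def .
qed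

section \<open>The choice \<open>z\<^sub>1,\<^sub>2 = (ln ln x)\<^bsup>1 \<mp> \<epsilon>\<^esup>\<close>\<close>

lemma sum_A_powr_le:
  fixes \<epsilon> w x :: real
  assumes e: "0 < \<epsilon>" "\<epsilon> < 4/5" and w: "1 < w" "2 < w powr (1 - \<epsilon>)" and x: "0 \<le> x"
  shows "(\<Sum>r | prime r \<and> w powr (1 - \<epsilon>) \<le> real r \<and> real r \<le> w powr (1 + \<epsilon>). real (A r x))
       \<le> 200 * (\<epsilon> * x / ln w) + 100 * x / ln w ^ 2 + (w^2 + 1) * 4 powr w"
proof -
  define z1 where "z1 = w powr (1 - \<epsilon>)"
  define z2 where "z2 = w powr (1 + \<epsilon>)"
  define L where "L = ln w"
  have L: "0 < L"
    using w by (simp add: L_def)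
  have z12: "z1 \<le> z2"
    unfolding z1_def z2_def using w e by (intro powr_mono) auto
  have z1: "2 < z1"
    using w by (simp add: z1_def)
  have lnz1: "ln z1 = (1 - \<epsilon>) * L" and lnz21: "ln (z2 / z1) = 2 * \<epsilon> * L"
    using w by (simp_all add: z1_def z2_def L_def ln_div algebra_simps)
  have "x / ln z1 * (4 * (ln (z2 / z1) + ln 2) / ln z1) = 4 * x * (2 * \<epsilon> * L + ln 2) / ((1 - \<epsilon>)^2 * L^2)"
    unfolding lnz1 lnz21 using e L by (simp add: field_simps power2_eq_square)
  also have "\<dots> \<le> 4 * x * (2 * \<epsilon> * L + 1) / ((1/5)^2 * L^2)"
    using e x L ln_2_less_1 by (intro frac_le mult_left_mono add_left_mono mult_right_mono power_mono) auto
  also have "\<dots> = 200 * (\<epsilon> * x / L) + 100 * x / L^2"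
    using L by (simp add: field_simps power2_eq_square)
  finally have main: "x / ln z1 * (4 * (ln (z2 / z1) + ln 2) / ln z1) \<le> 200 * (\<epsilon> * x / L) + 100 * x / L^2" .
  have "z2 + 1 \<le> w^2 + 1"
    using w e powr_mono[of "1 + \<epsilon>" 2 w] by (simp add: z2_def powr_realpow)
  moreover have "4 powr z1 \<le> 4 powr w"
    using w e powr_mono[of "1 - \<epsilon>" 1 w] by (simp add: z1_def)
  ultimately have error: "(z2 + 1) * 4 powr z1 \<le> (w^2 + 1) * 4 powr w"
    by (intro mult_mono) auto
  have "(\<Sum>r | prime r \<and> z1 \<le> real r \<and> real r \<le> z2. real (A r x))
      \<le> x / ln z1 * (\<Sum>r | prime r \<and> z1 \<le> real r \<and> real r \<le> z2. 1 / real r) + (z2 + 1) * 4 powr z1"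
    using z1 z12 x by (rule sum_A_le)
  also have "\<dots> \<le> x / ln z1 * (4 * (ln (z2 / z1) + ln 2) / ln z1) + (z2 + 1) * 4 powr z1"
    using z1 z12 x e L by (intro add_right_mono mult_left_mono sum_inverse_primes_between_le) (auto simp: lnz1)
  finally show ?thesis
    using main error by (simp add: z1_def z2_def L_def)
qed

lemma sum_A_powr_le_eps:
  fixes \<epsilon> w x :: real
  assumes e: "0 < \<epsilon>" "\<epsilon> < 4/5" and w: "1 < w" "2 < w powr (1/5)" and x: "0 < x"
    and large: "100 \<le> \<epsilon> * ln w" and small: "(w^2 + 1) * 4 powr w * ln w \<le> \<epsilon> * x"
  shows "(\<Sum>r | prime r \<and> w powr (1 - \<epsilon>) \<le> real r \<and> real r \<le> w powr (1 + \<epsilon>). real (A r x))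
       \<le> 202 * (\<epsilon> * x / ln w)"
proof -
  have lnw: "0 < ln w"
    using w by simp
  have "w powr (1/5) \<le> w powr (1 - \<epsilon>)"
    using e w by (intro powr_mono) auto
  then have "2 < w powr (1 - \<epsilon>)"
    using w by linarith
  moreover have "100 * x / ln w ^ 2 \<le> \<epsilon> * x / ln w"
    using mult_right_mono[OF large, of x] x lnw by (simp add: field_simps power2_eq_square)
  moreover have "(w^2 + 1) * 4 powr w \<le> \<epsilon> * x / ln w"
    using small lnw by (simp add: field_simps)
  ultimately show ?thesis
    using sum_A_powr_le[of \<epsilon> w x] e w x by simp
qed

lemma sum_A_eventually_le:
  fixes \<epsilon> :: real
  assumes "0 < \<epsilon>" "\<epsilon> < 4/5"
  shows "\<forall>\<^sub>F x in at_top.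
    (\<Sum>r | prime r \<and> ln (ln x) powr (1 - \<epsilon>) \<le> real r \<and> real r \<le> ln (ln x) powr (1 + \<epsilon>). real (A r x))
      \<le> 202 * (\<epsilon> * x / ln (ln (ln x)))"
proof -
  have "((\<lambda>x::real. (ln (ln x)^2 + 1) * 4 powr ln (ln x) * ln (ln (ln x)) / x) \<longlongrightarrow> 0) at_top"
    by real_asymp
  then have small: "\<forall>\<^sub>F x in at_top. (ln (ln x)^2 + 1) * 4 powr ln (ln x) * ln (ln (ln x)) / x < \<epsilon>"
    using assms by (intro order_tendstoD(2)) auto
  have "filterlim (\<lambda>x::real. ln (ln (ln x))) at_top at_top"
    by real_asymp
  then have large: "\<forall>\<^sub>F x in at_top. 100 / \<epsilon> \<le> ln (ln (ln x))"
    by (simp add: filterlim_at_top)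
  have "\<forall>\<^sub>F x in at_top. 0 < (x::real)" "\<forall>\<^sub>F x in at_top. 1 < ln (ln (x::real))"
    "\<forall>\<^sub>F x in at_top. 2 < ln (ln (x::real)) powr (1/5)"
    by real_asymp+
  with small large show ?thesis
  proof eventually_elim
    case (elim x)
    then show ?case
      using sum_A_powr_le_eps[of \<epsilon> "ln (ln x)" x] assms by (simp add: field_simps)
  qed
qed

theorem lemma4p2:
  shows "\<exists>c::real. \<forall>\<epsilon>::real. 0 < \<epsilon> \<and> \<epsilon> < 4/5 \<longrightarrow>
    (\<forall>\<^sub>F x in at_top.
       (\<Sum>r\<in>{r::nat. prime r \<and> ln (ln x) powr (1 - \<epsilon>) \<le> real r \<and>
                        real r \<le> ln (ln x) powr (1 + \<epsilon>)}. real (A r x))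
       \<le> c * (\<epsilon> * x / ln (ln (ln x))))"
  using sum_A_eventually_le by blast

end
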